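(* Let $c>0$, $d\ge2$, $m\ge0$, and let $\phi_k$ be a nontrivial real solution bounded on $[-1,1]$ of $$\big((1-\eta)(1+\eta)^{m+\frac d2}\phi_k'(\eta)\big)'+\Big(\alpha_k-\frac{c^2(1+\eta)}{8}\Big)(1+\eta)^{m+\frac d2-1}\phi_k(\eta)=0,\qquad \eta\in(-1,1).$$ If $\alpha_k>\frac{c^2}{4}$, then $$\sup_{\eta\in[a_{m,d},1]}|\phi_k(\eta)|=|\phi_k(1)|,\qquad a_{m,d}=\frac{2m+d-2}{2m+d}.$$
   Context: This is the radial equation of ball prolate spheroidal wave functions $\psi(x)=r^m\phi_k(2r^2-1)Y(\hat x)$, where $\alpha_k=\frac14(\chi^{(m)}_k(c)-m(m+d))$ and $\chi^{(m)}_k(c)$ is the corresponding eigenvalue of $\mathcal{L}_c=-\nabla\cdot(1-\|x\|^2)\nabla-\Delta_0+c^2\|x\|^2$. *)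

theory Defs
  imports Complex_Main
begin

end

theory Submission
  imports Defs
begin

text \<open>
  The equation reads (P \<phi>')' + q \<phi> = 0 with P = (1 - \<eta>) (1 + \<eta>)^p,
  q = (\<alpha> - c^2 (1 + \<eta>)/8) (1 + \<eta>)^(p - 1) and p = m + d/2, so that a_{m,d} = (p - 1)/p.
  Sonin's function S = \<phi>^2 + (P \<phi>')^2 / (P q) has S' = - (P \<phi>')^2 (P q)' / (P q)^2, and
  P q = (1 - \<eta>) (1 + \<eta>)^(2p - 1) (\<alpha> - c^2 (1 + \<eta>)/8) is nonincreasing on [(p - 1)/p, 1)
  when \<alpha> > c^2/4. Hence \<phi>(\<eta>)^2 \<le> S(\<eta>) \<le> S(t) for \<eta> \<le> t < 1, and it remains to show
  S(t) \<rightarrow> \<phi>(1)^2, i.e. that the flux P \<phi>' vanishes linearly at 1. Boundedness of \<phi> forces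
  P \<phi>' to come arbitrarily close to 0 near 1 (otherwise |\<phi>'| \<ge> K/(1 - \<eta>) with a fixed sign,
  and \<phi> would grow like log(1/(1 - \<eta>))); since (P \<phi>')' = - q \<phi> is bounded, the mean value
  theorem turns this into |P \<phi>'| \<le> M (1 - \<eta>).
\<close>

lemma continuous_on_compact_pos_imp_ge_const:
  fixes f :: "'a::topological_space \<Rightarrow> real"
  assumes "compact S" "S \<noteq> {}" "continuous_on S f" "\<And>x. x \<in> S \<Longrightarrow> 0 < f x"
  obtains r where "0 < r" "\<And>x. x \<in> S \<Longrightarrow> r \<le> f x"
  using continuous_attains_inf[OF assms(1-3)] assms(4) by blast

lemma sgn_mult_eq_abs_if_continuous_nonzero:
  fixes f :: "real \<Rightarrow> real"
  assumes cont: "continuous_on {a..<b} f"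
    and nonzero: "\<And>x. x \<in> {a..<b} \<Longrightarrow> f x \<noteq> 0"
    and x: "x \<in> {a..<b}"
  shows "sgn (f a) * f x = \<bar>f x\<bar>"
proof -
  have "sgn (f x) = sgn (f a)"
  proof (rule ccontr)
    assume "sgn (f x) \<noteq> sgn (f a)"
    then have "f a \<le> 0 \<and> 0 \<le> f x \<or> f x \<le> 0 \<and> 0 \<le> f a"
      by (auto simp: sgn_if split: if_splits)
    moreover have "{a..x} \<subseteq> {a..<b}"
      using x by auto
    then have "continuous_on {a..x} f"
      using continuous_on_subset[OF cont] by blast
    ultimately obtain z where "a \<le> z" "z \<le> x" "f z = 0"
      using IVT'[of f a 0 x] IVT2'[of f x 0 a] x by auto
    then show False
      using nonzero[of z] x by auto
  qed
  then show ?thesis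
    by (metis abs_sgn mult.commute)
qed

lemma not_bdd_above_if_deriv_ge_inverse_distance:
  fixes f f' :: "real \<Rightarrow> real"
  assumes "t0 < 1" "K > 0"
    and deriv: "\<And>t. t \<in> {t0..<1} \<Longrightarrow> (f has_real_derivative f' t) (at t)"
    and growth: "\<And>t. t \<in> {t0..<1} \<Longrightarrow> K / (1 - t) \<le> f' t"
  shows "\<not> bdd_above (f ` {t0..<1})"
proof
  assume "bdd_above (f ` {t0..<1})"
  then obtain B where B: "\<And>t. t \<in> {t0..<1} \<Longrightarrow> f t \<le> B"
    unfolding bdd_above_def by blast
  define F where "F t = f t + K * ln (1 - t)" for t
  have F_mono: "F t0 \<le> F t" if "t \<in> {t0..<1}" for t
  proof (rule deriv_nonneg_imp_mono[where g = F and g' = "\<lambda>s. f' s - K / (1 - s)"])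
    fix s assume s: "s \<in> {t0..t}"
    then show "(F has_real_derivative f' s - K / (1 - s)) (at s)"
      unfolding F_def using that deriv[of s]
      by (auto intro!: derivative_eq_intros simp: field_simps)
    show "0 \<le> f' s - K / (1 - s)"
      using growth[of s] s that by auto
  qed (use that in auto)
  define e where "e = exp ((F t0 - B) / K)"
  have e_le: "e \<le> 1 - t" if "t \<in> {t0..<1}" for t
  proof -
    have "F t0 - B \<le> K * ln (1 - t)"
      using F_mono[OF that] B[OF that] unfolding F_def by linarith
    then have "(F t0 - B) / K \<le> ln (1 - t)"
      using \<open>K > 0\<close> by (simp add: divide_le_eq mult.commute)
    then have "e \<le> exp (ln (1 - t))"
      unfolding e_def by simp
    then show ?thesis
      using that by simp
  qed
  define t where "t = 1 - min e (1 - t0) / 2"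
  have "0 < e" unfolding e_def by simp
  then have "t \<in> {t0..<1}" "1 - t < e"
    using \<open>t0 < 1\<close> unfolding t_def by (auto simp: min_def field_simps)
  then show False
    using e_le by fastforce
qed

lemma flux_arbitrarily_small_near_endpoint:
  fixes \<phi> \<phi>' P :: "real \<Rightarrow> real"
  assumes "t < 1" "\<epsilon> > 0"
    and bdd: "\<And>s. s \<in> {t..<1} \<Longrightarrow> \<bar>\<phi> s\<bar> \<le> B"
    and deriv: "\<And>s. s \<in> {t..<1} \<Longrightarrow> (\<phi> has_real_derivative \<phi>' s) (at s)"
    and cont: "continuous_on {t..<1} (\<lambda>s. P s * \<phi>' s)"
    and P_pos: "\<And>s. s \<in> {t..<1} \<Longrightarrow> 0 < P s"
    and P_le: "\<And>s. s \<in> {t..<1} \<Longrightarrow> P s \<le> C * (1 - s)"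
  shows "\<exists>u\<in>{t<..<1}. \<bar>P u * \<phi>' u\<bar> < \<epsilon>"
proof (rule ccontr)
  define G where "G s = P s * \<phi>' s" for s
  assume "\<not> ?thesis"
  then have G_ge: "\<epsilon> \<le> \<bar>G s\<bar>" if "s \<in> {t<..<1}" for s
    using that unfolding G_def by (meson not_less)
  define t2 where "t2 = (t + 1) / 2"
  have t2: "t < t2" "t2 < 1"
    using \<open>t < 1\<close> unfolding t2_def by auto
  define \<sigma> where "\<sigma> = sgn (G t2)"
  have "continuous_on {t2..<1} G"
    using continuous_on_subset[OF cont] t2 unfolding G_def by auto
  moreover have "G s \<noteq> 0" if "s \<in> {t2..<1}" for s
    using G_ge[of s] \<open>\<epsilon> > 0\<close> t2 that by auto
  ultimately have \<sigma>G: "\<sigma> * G s = \<bar>G s\<bar>" if "s \<in> {t2..<1}" for s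
    unfolding \<sigma>_def using sgn_mult_eq_abs_if_continuous_nonzero that by blast
  have "0 < C * (1 - t2)"
    using P_pos[of t2] P_le[of t2] t2 by auto
  then have C_pos: "0 < C"
    using t2 by (simp add: zero_less_mult_iff)
  have "\<not> bdd_above ((\<lambda>s. \<sigma> * \<phi> s) ` {t2..<1})"
  proof (rule not_bdd_above_if_deriv_ge_inverse_distance)
    fix s assume s: "s \<in> {t2..<1}"
    then show "((\<lambda>s. \<sigma> * \<phi> s) has_real_derivative \<sigma> * \<phi>' s) (at s)"
      using deriv[of s] t2 by (auto intro: DERIV_cmult)
    have "\<epsilon> / C / (1 - s) = \<epsilon> / (C * (1 - s))"
      by simp
    also have "\<dots> \<le> \<sigma> * G s / P s"
      using G_ge[of s] \<sigma>G[OF s] P_pos[of s] P_le[of s] s t2 \<open>\<epsilon> > 0\<close>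
      by (intro frac_le) auto
    also have "\<dots> = \<sigma> * \<phi>' s"
      using P_pos[of s] s t2 unfolding G_def by simp
    finally show "\<epsilon> / C / (1 - s) \<le> \<sigma> * \<phi>' s" .
  qed (use t2 C_pos \<open>\<epsilon> > 0\<close> in auto)
  moreover have "bdd_above ((\<lambda>s. \<sigma> * \<phi> s) ` {t2..<1})"
  proof (rule bdd_aboveI2)
    show "\<sigma> * \<phi> s \<le> B" if "s \<in> {t2..<1}" for s
      using bdd[of s] that t2 unfolding \<sigma>_def by (auto simp: sgn_if abs_le_iff)
  qed
  ultimately show False
    by contradiction
qed

lemma abs_le_linear_if_deriv_bounded:
  fixes G G' :: "real \<Rightarrow> real"
  assumes deriv: "\<And>s. s \<in> {t..<1} \<Longrightarrow> (G has_real_derivative G' s) (at s)"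
    and deriv_bound: "\<And>s. s \<in> {t..<1} \<Longrightarrow> \<bar>G' s\<bar> \<le> M"
    and small: "\<And>\<epsilon>. \<epsilon> > 0 \<Longrightarrow> \<exists>u\<in>{t<..<1}. \<bar>G u\<bar> < \<epsilon>"
  shows "\<bar>G t\<bar> \<le> M * (1 - t)"
proof (rule field_le_epsilon)
  fix \<epsilon> :: real assume "\<epsilon> > 0"
  then obtain u where u: "t < u" "u < 1" "\<bar>G u\<bar> < \<epsilon>"
    using small[OF \<open>\<epsilon> > 0\<close>] by auto
  obtain z where z: "t < z" "z < u" "G u - G t = (u - t) * G' z"
    using MVT2[of t u G G'] deriv u by auto
  have "\<bar>G' z\<bar> \<le> M"
    using deriv_bound[of z] z u by auto
  then have "\<bar>(u - t) * G' z\<bar> \<le> (1 - t) * M"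
    using u by (auto simp: abs_mult intro!: mult_mono)
  then show "\<bar>G t\<bar> \<le> M * (1 - t) + \<epsilon>"
    using z u by (simp add: algebra_simps)
qed

lemma flux_vanishes_linearly:
  fixes \<phi> \<phi>' P q :: "real \<Rightarrow> real"
  assumes "t < 1"
    and bdd: "\<And>s. s \<in> {t..<1} \<Longrightarrow> \<bar>\<phi> s\<bar> \<le> B"
    and q_bdd: "\<And>s. s \<in> {t..<1} \<Longrightarrow> \<bar>q s\<bar> \<le> Q"
    and P_pos: "\<And>s. s \<in> {t..<1} \<Longrightarrow> 0 < P s"
    and P_le: "\<And>s. s \<in> {t..<1} \<Longrightarrow> P s \<le> C * (1 - s)"
    and deriv: "\<And>s. s \<in> {t..<1} \<Longrightarrow> (\<phi> has_real_derivative \<phi>' s) (at s)"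
    and flux: "\<And>s. s \<in> {t..<1} \<Longrightarrow> ((\<lambda>s. P s * \<phi>' s) has_real_derivative - q s * \<phi> s) (at s)"
  shows "\<bar>P t * \<phi>' t\<bar> \<le> Q * B * (1 - t)"
proof (rule abs_le_linear_if_deriv_bounded[OF flux])
  show "\<bar>- q s * \<phi> s\<bar> \<le> Q * B" if "s \<in> {t..<1}" for s
    unfolding abs_mult abs_minus using q_bdd[OF that] bdd[OF that]
    by (intro mult_mono) auto
  have "continuous_on {t..<1} (\<lambda>s. P s * \<phi>' s)"
    by (intro continuous_at_imp_continuous_on ballI DERIV_isCont[OF flux])
  then show "\<exists>u\<in>{t<..<1}. \<bar>P u * \<phi>' u\<bar> < \<epsilon>" if "\<epsilon> > 0" for \<epsilon>
    using flux_arbitrarily_small_near_endpoint[of t \<epsilon> \<phi> B \<phi>' P C] assms that by blast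
qed

lemma le_at_endpoint_if_le_linear_perturbation:
  fixes f :: "real \<Rightarrow> real"
  assumes "a \<le> \<eta>" "\<eta> < 1" "continuous_on {a..1} f"
    and le: "\<And>t. t \<in> {\<eta><..<1} \<Longrightarrow> x \<le> f t + L * (1 - t)"
  shows "x \<le> f 1"
proof -
  have "((\<lambda>t. f t + L * (1 - t)) \<longlongrightarrow> f 1 + L * (1 - 1)) (at_left 1)"
    using continuous_on_Icc_at_leftD[OF assms(3)] assms(1,2) by (intro tendsto_intros) auto
  moreover have "\<forall>\<^sub>F t in at_left 1. x \<le> f t + L * (1 - t)"
    using eventually_at_left_real[OF \<open>\<eta> < 1\<close>] le by (auto elim: eventually_mono)
  ultimately show ?thesis
    using tendsto_lowerbound[OF _ _ trivial_limit_at_left_real] by fastforce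
qed

definition sonin :: "(real \<Rightarrow> real) \<Rightarrow> (real \<Rightarrow> real) \<Rightarrow> (real \<Rightarrow> real) \<Rightarrow> (real \<Rightarrow> real) \<Rightarrow> real \<Rightarrow> real"
  where "sonin P q \<phi> \<phi>' t = \<phi> t ^ 2 + (P t * \<phi>' t) ^ 2 / (P t * q t)"

lemma has_real_derivative_sonin:
  fixes P q \<phi> \<phi>' :: "real \<Rightarrow> real"
  assumes "0 < P t" "0 < q t"
    and "(\<phi> has_real_derivative \<phi>' t) (at t)"
    and "((\<lambda>s. P s * \<phi>' s) has_real_derivative - q t * \<phi> t) (at t)"
    and "((\<lambda>s. P s * q s) has_real_derivative R') (at t)"
  shows "(sonin P q \<phi> \<phi>' has_real_derivative - ((P t * \<phi>' t) ^ 2 * R') / (P t * q t) ^ 2) (at t)"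
proof -
  have "((\<lambda>s. \<phi> s ^ 2 + (P s * \<phi>' s) ^ 2 / (P s * q s)) has_real_derivative
      of_nat 2 * (\<phi>' t * \<phi> t ^ (2 - Suc 0))
      + (of_nat 2 * (- q t * \<phi> t * (P t * \<phi>' t) ^ (2 - Suc 0)) * (P t * q t)
         - (P t * \<phi>' t) ^ 2 * R') / (P t * q t * (P t * q t))) (at t)"
    using assms by (intro DERIV_add DERIV_power DERIV_divide) auto
  moreover have "of_nat 2 * (\<phi>' t * \<phi> t ^ (2 - Suc 0))
      + (of_nat 2 * (- q t * \<phi> t * (P t * \<phi>' t) ^ (2 - Suc 0)) * (P t * q t)
         - (P t * \<phi>' t) ^ 2 * R') / (P t * q t * (P t * q t))
      = - ((P t * \<phi>' t) ^ 2 * R') / (P t * q t) ^ 2"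
    using assms(1,2) by (simp add: field_simps power2_eq_square)
  ultimately show ?thesis
    unfolding sonin_def[abs_def] by simp
qed

lemma sonin_le_of_flux_bound:
  fixes P q \<phi> \<phi>' :: "real \<Rightarrow> real"
  assumes "t < 1" "0 < r"
    and flux_bound: "\<bar>P t * \<phi>' t\<bar> \<le> M * (1 - t)"
    and weight_ge: "(1 - t) * r \<le> P t * q t"
  shows "sonin P q \<phi> \<phi>' t \<le> \<phi> t ^ 2 + M ^ 2 / r * (1 - t)"
proof -
  have "(P t * \<phi>' t) ^ 2 \<le> (M * (1 - t)) ^ 2"
    using power_mono[OF flux_bound abs_ge_zero, of 2] by simp
  then have "(P t * \<phi>' t) ^ 2 / (P t * q t) \<le> (M * (1 - t)) ^ 2 / ((1 - t) * r)"
    using assms by (intro frac_le) auto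
  also have "\<dots> = M ^ 2 / r * (1 - t)"
    using assms(1,2) by (simp add: field_simps power2_eq_square)
  finally show ?thesis
    unfolding sonin_def by simp
qed

lemma sonin_mono:
  fixes P q \<phi> \<phi>' :: "real \<Rightarrow> real"
  assumes "x \<le> y"
    and pos: "\<And>t. t \<in> {x..y} \<Longrightarrow> 0 < P t \<and> 0 < q t"
    and deriv: "\<And>t. t \<in> {x..y} \<Longrightarrow> (\<phi> has_real_derivative \<phi>' t) (at t)"
    and flux: "\<And>t. t \<in> {x..y} \<Longrightarrow> ((\<lambda>s. P s * \<phi>' s) has_real_derivative - q t * \<phi> t) (at t)"
    and weight: "\<And>t. t \<in> {x..y} \<Longrightarrow> \<exists>R' \<le> 0. ((\<lambda>s. P s * q s) has_real_derivative R') (at t)"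
  shows "sonin P q \<phi> \<phi>' x \<le> sonin P q \<phi> \<phi>' y"
proof (rule DERIV_nonneg_imp_increasing_open[OF \<open>x \<le> y\<close>])
  have nonneg_deriv: "\<exists>D. (sonin P q \<phi> \<phi>' has_real_derivative D) (at t) \<and> 0 \<le> D" if t: "t \<in> {x..y}" for t
  proof -
    obtain R' where "R' \<le> 0" "((\<lambda>s. P s * q s) has_real_derivative R') (at t)"
      using weight[OF t] by auto
    moreover have "0 \<le> - ((P t * \<phi>' t) ^ 2 * R') / (P t * q t) ^ 2"
      using \<open>R' \<le> 0\<close> by (simp add: divide_nonpos_nonneg mult_nonneg_nonpos)
    ultimately show ?thesis
      using has_real_derivative_sonin pos[OF t] deriv[OF t] flux[OF t] by blast
  qed
  then show "\<exists>D. (sonin P q \<phi> \<phi>' has_real_derivative D) (at t) \<and> 0 \<le> D" if "x < t" "t < y" for t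
    using that by auto
  show "continuous_on {x..y} (sonin P q \<phi> \<phi>')"
    using nonneg_deriv by (meson DERIV_isCont continuous_at_imp_continuous_on)
qed

theorem sturm_liouville_sup_abs_at_endpoint:
  fixes \<phi> \<phi>' w q :: "real \<Rightarrow> real" and a :: real
  assumes "a < 1"
    and cont: "continuous_on {a..1} \<phi>" "continuous_on {a..1} w" "continuous_on {a..1} q"
    and pos: "\<And>t. t \<in> {a..1} \<Longrightarrow> 0 < w t \<and> 0 < q t"
    and deriv: "\<And>t. t \<in> {a..<1} \<Longrightarrow> (\<phi> has_real_derivative \<phi>' t) (at t)"
    and flux: "\<And>t. t \<in> {a..<1} \<Longrightarrow>
      ((\<lambda>s. (1 - s) * w s * \<phi>' s) has_real_derivative - q t * \<phi> t) (at t)"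
    and weight: "\<And>t. t \<in> {a..<1} \<Longrightarrow>
      \<exists>R' \<le> 0. ((\<lambda>s. (1 - s) * w s * q s) has_real_derivative R') (at t)"
  shows "(SUP t\<in>{a..1}. \<bar>\<phi> t\<bar>) = \<bar>\<phi> 1\<bar>"
proof -
  define P where "P s = (1 - s) * w s" for s
  have ne: "{a..1} \<noteq> {}"
    using \<open>a < 1\<close> by auto
  obtain B where B: "\<And>t. t \<in> {a..1} \<Longrightarrow> \<bar>\<phi> t\<bar> \<le> B"
    using continuous_attains_sup[OF compact_Icc ne continuous_on_rabs[OF cont(1)]] by blast
  obtain Q where Q: "\<And>t. t \<in> {a..1} \<Longrightarrow> q t \<le> Q"
    using continuous_attains_sup[OF compact_Icc ne cont(3)] by blast
  obtain W where W: "\<And>t. t \<in> {a..1} \<Longrightarrow> w t \<le> W"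
    using continuous_attains_sup[OF compact_Icc ne cont(2)] by blast
  obtain r where r: "0 < r" "\<And>t. t \<in> {a..1} \<Longrightarrow> r \<le> w t * q t"
    using continuous_on_compact_pos_imp_ge_const[OF compact_Icc ne continuous_on_mult[OF cont(2,3)]] pos
    by (metis mult_pos_pos)
  have flux_bound: "\<bar>P t * \<phi>' t\<bar> \<le> Q * B * (1 - t)" if t: "t \<in> {a..<1}" for t
  proof (rule flux_vanishes_linearly[where C = W])
    fix s assume s: "s \<in> {t..<1}"
    then show "\<bar>\<phi> s\<bar> \<le> B" "\<bar>q s\<bar> \<le> Q" "0 < P s"
      using B[of s] Q[of s] pos[of s] t unfolding P_def by auto
    show "P s \<le> W * (1 - s)"
      unfolding P_def using W[of s] s t by (auto simp: mult.commute intro: mult_left_mono)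
    show "(\<phi> has_real_derivative \<phi>' s) (at s)"
      "((\<lambda>s. P s * \<phi>' s) has_real_derivative - q s * \<phi> s) (at s)"
      unfolding P_def using deriv[of s] flux[of s] s t by auto
  qed (use t in auto)
  have weight_ge: "(1 - t) * r \<le> P t * q t" if "t \<in> {a..<1}" for t
    using r(2)[of t] that unfolding P_def by (simp add: mult.assoc mult_left_mono)
  have "\<phi> \<eta> ^ 2 \<le> \<phi> 1 ^ 2" if \<eta>: "\<eta> \<in> {a..<1}" for \<eta>
  proof (rule le_at_endpoint_if_le_linear_perturbation[where L = "(Q * B) ^ 2 / r"])
    fix t assume t: "t \<in> {\<eta><..<1}"
    have "\<phi> \<eta> ^ 2 \<le> sonin P q \<phi> \<phi>' \<eta>"
      using pos[of \<eta>] \<eta> unfolding sonin_def P_def by simp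
    also have "\<dots> \<le> sonin P q \<phi> \<phi>' t"
      by (rule sonin_mono) (use t \<eta> pos deriv flux weight in \<open>auto simp: P_def\<close>)
    also have "\<dots> \<le> \<phi> t ^ 2 + (Q * B) ^ 2 / r * (1 - t)"
      using t \<eta> by (intro sonin_le_of_flux_bound r(1) flux_bound weight_ge) auto
    finally show "\<phi> \<eta> ^ 2 \<le> \<phi> t ^ 2 + (Q * B) ^ 2 / r * (1 - t)" .
  next
    show "continuous_on {a..1} (\<lambda>t. \<phi> t ^ 2)"
      by (intro continuous_intros cont(1))
  qed (use \<eta> in auto)
  then have "\<bar>\<phi> \<eta>\<bar> \<le> \<bar>\<phi> 1\<bar>" if "\<eta> \<in> {a..1}" for \<eta>
    using that by (cases "\<eta> = 1") (auto simp: abs_le_square_iff)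
  then show ?thesis
    using \<open>a < 1\<close> by (intro cSup_eq_maximum) auto
qed

lemma radial_coefficient_pos:
  fixes \<alpha> c t :: real
  assumes "c ^ 2 / 4 < \<alpha>" "t \<le> 1"
  shows "0 < \<alpha> - c ^ 2 * (1 + t) / 8"
proof -
  have "c ^ 2 * (1 + t) \<le> c ^ 2 * 2"
    using assms(2) by (intro mult_left_mono) auto
  then show ?thesis
    using assms(1) by linarith
qed

lemma radial_weight_has_derivative:
  fixes p \<alpha> c t :: real
  assumes "-1 < t"
  shows "((\<lambda>s. (1 - s) * (1 + s) powr p * ((\<alpha> - c ^ 2 * (1 + s) / 8) * (1 + s) powr (p - 1)))
    has_real_derivative (1 + t) powr (2 * p - 2) *
      ((\<alpha> - c ^ 2 * (1 + t) / 8) * ((2 * p - 1) * (1 - t) - (1 + t)) - (1 - t) * (1 + t) * c ^ 2 / 8))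
    (at t)"
proof -
  define A where "A s = \<alpha> - c ^ 2 * (1 + s) / 8" for s
  define X where "X = (1 + t) powr (2 * p - 2)"
  have "((\<lambda>s. (1 - s) * A s * (1 + s) powr (2 * p - 1)) has_real_derivative
      (- A t - (1 - t) * (c ^ 2 / 8)) * (1 + t) powr (2 * p - 1)
      + (1 - t) * A t * ((2 * p - 1) * (1 + t) powr (2 * p - 1 - 1))) (at t)"
    unfolding A_def using assms by (auto intro!: derivative_eq_intros)
  moreover have "(1 + t) powr (2 * p - 1) = X * (1 + t)"
    using assms powr_add[of "1 + t" "2 * p - 2" 1] unfolding X_def by simp
  moreover have "(1 + t) powr (2 * p - 1 - 1) = X"
    unfolding X_def by simp
  ultimately have "((\<lambda>s. (1 - s) * A s * (1 + s) powr (2 * p - 1)) has_real_derivative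
      X * (A t * ((2 * p - 1) * (1 - t) - (1 + t)) - (1 - t) * (1 + t) * c ^ 2 / 8)) (at t)"
    by (simp add: algebra_simps)
  then have "((\<lambda>s. (1 - s) * A s * (1 + s) powr (2 * p - 1)) has_real_derivative
      (1 + t) powr (2 * p - 2) *
      ((\<alpha> - c ^ 2 * (1 + t) / 8) * ((2 * p - 1) * (1 - t) - (1 + t)) - (1 - t) * (1 + t) * c ^ 2 / 8))
      (at t)"
    by (simp only: X_def A_def[of t])
  then show ?thesis
  proof (rule has_field_derivative_transform_within_open[where S = "{-1<..}"])
    fix s :: real assume "s \<in> {-1<..}"
    then have "(1 + s) powr p * (1 + s) powr (p - 1) = (1 + s) powr (2 * p - 1)"
      by (simp add: powr_add [symmetric])
    then show "(1 - s) * A s * (1 + s) powr (2 * p - 1)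
        = (1 - s) * (1 + s) powr p * ((\<alpha> - c ^ 2 * (1 + s) / 8) * (1 + s) powr (p - 1))"
      unfolding A_def by (metis mult.assoc mult.left_commute)
  qed (use assms in auto)
qed

lemma radial_weight_has_nonpos_deriv:
  fixes p \<alpha> c t :: real
  assumes "1 \<le> p" "(p - 1) / p \<le> t" "t < 1" "c ^ 2 / 4 < \<alpha>"
  shows "\<exists>R' \<le> 0. ((\<lambda>s. (1 - s) * (1 + s) powr p * ((\<alpha> - c ^ 2 * (1 + s) / 8) * (1 + s) powr (p - 1)))
    has_real_derivative R') (at t)"
proof -
  have "0 \<le> (p - 1) / p"
    using assms(1) by simp
  then have t: "0 \<le> t"
    using assms(2) by linarith
  have "(2 * p - 1) * (1 - t) - (1 + t) \<le> 0"
    using assms(1,2) by (simp add: divide_le_eq algebra_simps)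
  then have "(\<alpha> - c ^ 2 * (1 + t) / 8) * ((2 * p - 1) * (1 - t) - (1 + t)) \<le> 0"
    using radial_coefficient_pos[OF assms(4), of t] assms(3) by (simp add: mult_nonneg_nonpos)
  moreover have "0 \<le> (1 - t) * (1 + t) * c ^ 2 / 8"
    using assms(3) t by simp
  ultimately have "(1 + t) powr (2 * p - 2) *
      ((\<alpha> - c ^ 2 * (1 + t) / 8) * ((2 * p - 1) * (1 - t) - (1 + t)) - (1 - t) * (1 + t) * c ^ 2 / 8) \<le> 0"
    by (simp add: mult_nonneg_nonpos)
  then show ?thesis
    using radial_weight_has_derivative[of t p \<alpha> c] t by auto
qed

theorem lemma3p6:
  fixes c \<alpha> :: real and d m :: nat
    and \<phi> \<phi>' \<psi> :: "real \<Rightarrow> real"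
  assumes c_pos: "c > 0"
    and d_ge: "d \<ge> 2"
    and cont: "continuous_on {-1..1} \<phi>"
    and bdd: "bdd_above (abs ` \<phi> ` {-1..1})"
    and nontriv: "\<exists>\<eta>\<in>{-1<..<1}. \<phi> \<eta> \<noteq> 0"
    and deriv1: "\<And>\<eta>. \<eta> \<in> {-1<..<1} \<Longrightarrow> (\<phi> has_real_derivative \<phi>' \<eta>) (at \<eta>)"
    and deriv2: "\<And>\<eta>. \<eta> \<in> {-1<..<1} \<Longrightarrow>
        ((\<lambda>x. (1 - x) * (1 + x) powr (real m + real d / 2) * \<phi>' x)
           has_real_derivative \<psi> \<eta>) (at \<eta>)"
    and ode: "\<And>\<eta>. \<eta> \<in> {-1<..<1} \<Longrightarrow>
        \<psi> \<eta> + (\<alpha> - c^2 * (1 + \<eta>) / 8) * (1 + \<eta>) powr (real m + real d / 2 - 1) * \<phi> \<eta> = 0"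
    and alpha_gt: "\<alpha> > c^2 / 4"
  shows "(SUP \<eta>\<in>{(2 * real m + real d - 2) / (2 * real m + real d)..1}. \<bar>\<phi> \<eta>\<bar>) = \<bar>\<phi> 1\<bar>"
  \<comment> \<open>\<open>bdd\<close> follows from \<open>cont\<close>.\<close>
proof -
  define p where "p = real m + real d / 2"
  define a where "a = (2 * real m + real d - 2) / (2 * real m + real d)"
  have p: "1 \<le> p" and a: "a = (p - 1) / p"
    using d_ge unfolding p_def a_def by (auto simp: field_simps)
  then have a_range: "0 \<le> a" "a < 1"
    by auto
  have "(SUP \<eta>\<in>{a..1}. \<bar>\<phi> \<eta>\<bar>) = \<bar>\<phi> 1\<bar>"
  proof (rule sturm_liouville_sup_abs_at_endpoint[where w = "\<lambda>s. (1 + s) powr p"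
        and q = "\<lambda>s. (\<alpha> - c ^ 2 * (1 + s) / 8) * (1 + s) powr (p - 1)"])
    show "continuous_on {a..1} \<phi>"
      using continuous_on_subset[OF cont] a_range by auto
    show "continuous_on {a..1} (\<lambda>s. (1 + s) powr p)"
      "continuous_on {a..1} (\<lambda>s. (\<alpha> - c ^ 2 * (1 + s) / 8) * (1 + s) powr (p - 1))"
      using a_range by (auto intro!: continuous_intros)
    show "((\<lambda>s. (1 - s) * (1 + s) powr p * \<phi>' s) has_real_derivative
        - ((\<alpha> - c ^ 2 * (1 + t) / 8) * (1 + t) powr (p - 1)) * \<phi> t) (at t)" if "t \<in> {a..<1}" for t
    proof -
      have "\<psi> t = - ((\<alpha> - c ^ 2 * (1 + t) / 8) * (1 + t) powr (p - 1)) * \<phi> t"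
        using ode[of t] that a_range unfolding p_def by (simp add: eq_neg_iff_add_eq_0)
      then show ?thesis
        using deriv2[of t] that a_range unfolding p_def by simp
    qed
    show "0 < (1 + t) powr p \<and> 0 < (\<alpha> - c ^ 2 * (1 + t) / 8) * (1 + t) powr (p - 1)"
      if "t \<in> {a..1}" for t
      using that a_range radial_coefficient_pos[OF alpha_gt, of t] by auto
    show "\<exists>R' \<le> 0. ((\<lambda>s. (1 - s) * (1 + s) powr p * ((\<alpha> - c ^ 2 * (1 + s) / 8) * (1 + s) powr (p - 1)))
        has_real_derivative R') (at t)" if "t \<in> {a..<1}" for t
      using radial_weight_has_nonpos_deriv[OF p] that a alpha_gt by auto
  qed (use a_range deriv1 in auto)
  then show ?thesis
    unfolding a_def .
qed

end
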